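(* Let $(X,\Sigma,\mu)$ be a $\sigma$-finite measure space, $n\ge1$, $b\in\mathbb{C}^n\setminus\{0\}$, $\epsilon>0$ and $h\in L^\infty(X,\mu;\mathbb{C})$. Define $q:L^2(X,\mu;\mathbb{C}^n)\to\mathbb{C}^n$ by $q(F)=\int_X h(x)\langle b,f_x\rangle f_x\,d\mu(x)$ for $F=(f_x)_{x\in X}$. Let $d\in\mathbb{C}^n$ and suppose: (i) if $d\neq0$: there exist a measurable $Y\subseteq X$ with $\dim L^2(Y,\mu;\mathbb{C})\ge n$, and measurable sets $B_1\subseteq\{z\in\mathbb{C}:\mathrm{Re}(\langle b,d\rangle z)>\epsilon,\ \mathrm{Im}(\langle b,d\rangle z)<-\epsilon\}$ and $B_2\subseteq\{z\in\mathbb{C}:\mathrm{Re}(\langle b,d\rangle z)>\epsilon,\ \mathrm{Im}(\langle b,d\rangle z)>\epsilon\}$ with $\mu((X\setminus Y)\cap h^{-1}(B_1))>0$ and $\mu((X\setminus Y)\cap h^{-1}(B_2))>0$; (ii) if $d=0$: there exists a measurable $Y\subseteq X$ with $\dim L^2(Y,\mu;\mathbb{C})\ge n$ and $h(x)$ real with $h(x)<0$ for $\mu$-a.e. $x\in Y$, and moreover either there exist measurable $B_1\subseteq\{z:\mathrm{Re}\,z>0,\ \mathrm{Im}\,z<0\}$ and $B_2\subseteq\{z:\mathrm{Re}\,z>0,\ \mathrm{Im}\,z>0\}$ with $\mu((X\setminus Y)\cap h^{-1}(B_1))>0$ and $\mu((X\setminus Y)\cap h^{-1}(B_2))>0$,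 or there exists a measurable $B_3\subseteq\{z:\mathrm{Re}\,z>0,\ \mathrm{Im}\,z=0\}$ with $\mu((X\setminus Y)\cap h^{-1}(B_3))>0$. Then there exists a continuous frame $\Phi\in\mathcal{F}^{\mathbb{C}}_{(X,\mu),n}$ with $q(\Phi)=d$.
   Context: The inner product on $\mathbb{C}^n$ is $\langle u,v\rangle=\sum_k u^k\overline{v^k}$. A family $\Phi=(\varphi_x)_{x\in X}$ in $\mathbb{C}^n$ (with measurable coordinates) is a continuous frame indexed by $(X,\mu)$ if there are $0<A\le B$ with $A\|v\|^2\le\int_X|\langle v,\varphi_x\rangle|^2d\mu(x)\le B\|v\|^2$ for all $v\in\mathbb{C}^n$. $\mathcal{F}^{\mathbb{C}}_{(X,\mu),n}$ denotes the set of such frames, viewed as a subset of $L^2(X,\mu;\mathbb{C}^n)$. $L^2(Y,\mu;\mathbb{C})$ is the $L^2$ space of the restriction of $\mu$ to $Y$. *)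

theory Defs
  imports "HOL-Analysis.Analysis"
begin

definition cinner_n :: "complex ^ 'n::finite \<Rightarrow> complex ^ 'n \<Rightarrow> complex" where
  "cinner_n u v = (\<Sum>k\<in>UNIV. u $ k * cnj (v $ k))"

definition Linf_fun :: "'a measure \<Rightarrow> ('a \<Rightarrow> complex) \<Rightarrow> bool" where
  "Linf_fun M h \<longleftrightarrow> h \<in> borel_measurable M \<and> (\<exists>C. AE x in M. cmod (h x) \<le> C)"

definition cont_frame :: "'a measure \<Rightarrow> ('a \<Rightarrow> complex ^ 'n::finite) \<Rightarrow> bool" where
  "cont_frame M \<Phi> \<longleftrightarrow>
     (\<forall>k. (\<lambda>x. \<Phi> x $ k) \<in> borel_measurable M) \<and>
     (\<integral>\<^sup>+ x. ennreal ((norm (\<Phi> x))\<^sup>2) \<partial>M) < \<infinity> \<and>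
     (\<exists>A B. 0 < A \<and> A \<le> B \<and>
        (\<forall>v. ennreal (A * (norm v)\<^sup>2) \<le> (\<integral>\<^sup>+ x. ennreal ((cmod (cinner_n v (\<Phi> x)))\<^sup>2) \<partial>M)
           \<and> (\<integral>\<^sup>+ x. ennreal ((cmod (cinner_n v (\<Phi> x)))\<^sup>2) \<partial>M) \<le> ennreal (B * (norm v)\<^sup>2)))"

definition q_map :: "'a measure \<Rightarrow> ('a \<Rightarrow> complex) \<Rightarrow> complex ^ 'n::finite
                     \<Rightarrow> ('a \<Rightarrow> complex ^ 'n) \<Rightarrow> complex ^ 'n" where
  "q_map M h b F = (\<chi> k. \<integral> x. h x * cinner_n b (F x) * (F x $ k) \<partial>M)"

text \<open>dim L^2(Y,mu;C) >= CARD('n): there are CARD('n) square-integrable functions on Y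
  which are linearly independent as elements of L^2(Y) (i.e. modulo a.e. equality on Y).\<close>
definition L2_dim_ge :: "'a measure \<Rightarrow> 'a set \<Rightarrow> 'n::finite itself \<Rightarrow> bool" where
  "L2_dim_ge M Y _ \<longleftrightarrow>
     (\<exists>f :: 'n \<Rightarrow> 'a \<Rightarrow> complex.
        (\<forall>i. f i \<in> borel_measurable M \<and> (\<integral>\<^sup>+ x\<in>Y. ennreal ((cmod (f i x))\<^sup>2) \<partial>M) < \<infinity>) \<and>
        (\<forall>c :: 'n \<Rightarrow> complex. (AE x in M. x \<in> Y \<longrightarrow> (\<Sum>i\<in>UNIV. c i * f i x) = 0) \<longrightarrow> (\<forall>i. c i = 0)))"

end

(*
  On the set Y, n functions that are independent in L^2(Y) yield a continuous frame P
  supported in Y.  Outside Y we add a single vector w with a non-negative weight G, i.e.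
  Phi = t P + sqrt G w.  The two summands live on disjoint sets, so
  q(Phi) = t^2 q(P) + <b,w> (INT G h) w, and q(Phi) = d as soon as w is a multiple of
  d' = d - t^2 q(P) and <b,d'> (INT G h) is a positive real.

  The weight G is a non-negative combination of indicators of two finite-measure pieces
  of {h : B1} and {h : B2} outside Y: after multiplication by <b,d'> their integrals lie
  in the open quadrants of the right half-plane below and above the real axis, and a
  suitable combination of two such numbers is real and positive.  For d ~= 0 this holds
  for <b,d>, hence for <b,d'> = <b,d> - t^2 <b,q(P)> when t is small.  For d = 0 we take
  t = 1: as h < 0 on Y, <b,q(P)> is negative real, so <b,d'> = -<b,q(P)> is positive and
  it suffices that INT G h is real positive, which B3 also provides.
*)
theory Submission
  imports Defs
begin

section \<open>Inner products of complex vectors\<close>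

lemma power2_norm_vec: "(norm (x::complex^'n::finite))\<^sup>2 = (\<Sum>i\<in>UNIV. (cmod (x$i))\<^sup>2)"
  unfolding norm_vec_def L2_set_def by (simp add: sum_nonneg)

lemma norm_cinner_n_le: "cmod (cinner_n v p) \<le> real CARD('n) * norm v * norm (p::complex^'n::finite)"
proof -
  have "cmod (cinner_n v p) \<le> (\<Sum>k\<in>UNIV. cmod (v$k * cnj (p$k)))"
    unfolding cinner_n_def by (rule norm_sum)
  also have "\<dots> \<le> (\<Sum>k\<in>(UNIV::'n set). norm v * norm p)"
    by (intro sum_mono) (simp add: norm_mult, intro mult_mono Finite_Cartesian_Product.norm_nth_le norm_ge_zero)
  finally show ?thesis by simp
qed

lemma power2_norm_cinner_n_le:
  "(cmod (cinner_n v p))\<^sup>2 \<le> (real CARD('n) * norm v)\<^sup>2 * (norm (p::complex^'n::finite))\<^sup>2"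
  using power_mono[OF norm_cinner_n_le norm_ge_zero, of v p 2] by (simp add: power_mult_distrib)

lemma cinner_n_scaleR_right: "cinner_n v (r *\<^sub>R p) = of_real r * cinner_n v p"
  unfolding cinner_n_def by (simp only: vector_scaleR_component)
    (simp add: scaleR_conv_of_real sum_distrib_left algebra_simps)

lemma cinner_n_scaleR_left: "cinner_n (r *\<^sub>R v) p = of_real r * cinner_n v p"
  unfolding cinner_n_def by (simp only: vector_scaleR_component)
    (simp add: scaleR_conv_of_real sum_distrib_left algebra_simps)

lemma cinner_n_diff_right: "cinner_n v (p - q) = cinner_n v p - cinner_n v q"
  unfolding cinner_n_def by (simp add: sum_subtractf algebra_simps)

lemma cinner_n_minus_right: "cinner_n v (- p) = - cinner_n v p"
  unfolding cinner_n_def by (simp add: sum_negf)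

lemma cinner_n_zero_right [simp]: "cinner_n v 0 = 0"
  unfolding cinner_n_def by simp

lemma borel_measurable_cnj [measurable]:
  "f \<in> borel_measurable M \<Longrightarrow> (\<lambda>x. cnj (f x)) \<in> borel_measurable M"
  by (rule borel_measurable_continuous_on[OF continuous_on_cnj[OF continuous_on_id]])

lemma borel_measurable_cinner_n [measurable]:
  assumes "\<And>k. (\<lambda>x. F x $ k) \<in> borel_measurable M"
  shows "(\<lambda>x. cinner_n v (F x)) \<in> borel_measurable M"
  unfolding cinner_n_def using assms by measurable

lemma borel_measurable_power2_norm_vec [measurable]:
  assumes "\<And>k. (\<lambda>x. F x $ k) \<in> borel_measurable M"
  shows "(\<lambda>x. (norm (F x :: complex^'n::finite))\<^sup>2) \<in> borel_measurable M"
  unfolding power2_norm_vec using assms by measurable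

section \<open>Continuous frames from square-integrable families\<close>

definition square_integrable :: "'a measure \<Rightarrow> ('a \<Rightarrow> complex ^ 'n::finite) \<Rightarrow> bool" where
  "square_integrable M F \<longleftrightarrow>
     (\<forall>k. (\<lambda>x. F x $ k) \<in> borel_measurable M) \<and> integrable M (\<lambda>x. (norm (F x))\<^sup>2)"

lemma square_integrable_measurable:
  "square_integrable M F \<Longrightarrow> (\<lambda>x. F x $ k) \<in> borel_measurable M"
  unfolding square_integrable_def by blast

definition has_lower_frame_bound :: "'a measure \<Rightarrow> ('a \<Rightarrow> complex ^ 'n::finite) \<Rightarrow> bool" where
  "has_lower_frame_bound M F \<longleftrightarrow>
     (\<exists>A>0. \<forall>v. ennreal (A * (norm v)\<^sup>2) \<le> (\<integral>\<^sup>+ x. ennreal ((cmod (cinner_n v (F x)))\<^sup>2) \<partial>M))"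

lemma integrable_power2_norm_cinner_n:
  fixes F :: "'a \<Rightarrow> complex^'n::finite"
  assumes "square_integrable M F"
  shows "integrable M (\<lambda>x. (cmod (cinner_n v (F x)))\<^sup>2)"
proof (rule Bochner_Integration.integrable_bound)
  have [measurable]: "(\<lambda>x. F x $ k) \<in> borel_measurable M" for k
    using assms by (rule square_integrable_measurable)
  show "integrable M (\<lambda>x. (real CARD('n) * norm v)\<^sup>2 * (norm (F x))\<^sup>2)"
    using assms unfolding square_integrable_def by simp
  show "(\<lambda>x. (cmod (cinner_n v (F x)))\<^sup>2) \<in> borel_measurable M"
    by measurable
  show "AE x in M. norm ((cmod (cinner_n v (F x)))\<^sup>2) \<le> norm ((real CARD('n) * norm v)\<^sup>2 * (norm (F x))\<^sup>2)"
    by (intro AE_I2) (simp add: power2_norm_cinner_n_le)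
qed

lemma integrable_q_map_integrand:
  fixes h :: "'a \<Rightarrow> complex" and F :: "'a \<Rightarrow> complex^'n::finite"
  assumes [measurable]: "h \<in> borel_measurable M" and h_bounded: "AE x in M. cmod (h x) \<le> C"
    and F: "square_integrable M F"
  shows "integrable M (\<lambda>x. h x * cinner_n b (F x) * F x $ k)"
proof (rule Bochner_Integration.integrable_bound)
  have [measurable]: "(\<lambda>x. F x $ k) \<in> borel_measurable M" for k
    using F by (rule square_integrable_measurable)
  show "integrable M (\<lambda>x. (max C 0 * (real CARD('n) * norm b)) * (norm (F x))\<^sup>2)"
    using F unfolding square_integrable_def by auto
  show "(\<lambda>x. h x * cinner_n b (F x) * F x $ k) \<in> borel_measurable M"
    by measurable
  show "AE x in M. norm (h x * cinner_n b (F x) * F x $ k)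
     \<le> norm ((max C 0 * (real CARD('n) * norm b)) * (norm (F x))\<^sup>2)"
    using h_bounded
  proof eventually_elim
    case (elim x)
    have "norm (h x * cinner_n b (F x) * F x $ k)
        = cmod (h x) * cmod (cinner_n b (F x)) * cmod (F x $ k)"
      by (simp add: norm_mult)
    also have "\<dots> \<le> max C 0 * (real CARD('n) * norm b * norm (F x)) * norm (F x)"
      by (intro mult_mono norm_cinner_n_le Finite_Cartesian_Product.norm_nth_le) (use elim in auto)
    finally show ?case
      by (simp add: power2_eq_square abs_mult mult_ac)
  qed
qed

lemma nn_integral_power2_norm_cinner_n_le:
  fixes F :: "'a \<Rightarrow> complex^'n::finite"
  assumes F: "square_integrable M F"
  shows "(\<integral>\<^sup>+ x. ennreal ((cmod (cinner_n v (F x)))\<^sup>2) \<partial>M)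
    \<le> ennreal ((real CARD('n))\<^sup>2 * (\<integral>x. (norm (F x))\<^sup>2 \<partial>M) * (norm v)\<^sup>2)"
proof -
  have [measurable]: "(\<lambda>x. F x $ k) \<in> borel_measurable M" for k
    using F by (rule square_integrable_measurable)
  have int: "integrable M (\<lambda>x. (norm (F x))\<^sup>2)"
    using F unfolding square_integrable_def by blast
  have "(\<integral>\<^sup>+ x. ennreal ((cmod (cinner_n v (F x)))\<^sup>2) \<partial>M)
      \<le> (\<integral>\<^sup>+ x. ennreal ((real CARD('n) * norm v)\<^sup>2) * ennreal ((norm (F x))\<^sup>2) \<partial>M)"
    by (rule nn_integral_mono) (simp add: ennreal_mult[symmetric] power2_norm_cinner_n_le)
  also have "\<dots> = ennreal ((real CARD('n) * norm v)\<^sup>2) * ennreal (\<integral>x. (norm (F x))\<^sup>2 \<partial>M)"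
    by (simp add: nn_integral_cmult nn_integral_eq_integral[OF int])
  also have "\<dots> = ennreal ((real CARD('n))\<^sup>2 * (\<integral>x. (norm (F x))\<^sup>2 \<partial>M) * (norm v)\<^sup>2)"
    by (simp add: ennreal_mult[symmetric] power_mult_distrib mult_ac)
  finally show ?thesis .
qed

lemma cont_frameI:
  fixes F :: "'a \<Rightarrow> complex^'n::finite"
  assumes F: "square_integrable M F" and "has_lower_frame_bound M F"
  shows "cont_frame M F"
proof -
  obtain A where "A > 0"
    and lower: "\<And>v. ennreal (A * (norm v)\<^sup>2) \<le> (\<integral>\<^sup>+ x. ennreal ((cmod (cinner_n v (F x)))\<^sup>2) \<partial>M)"
    using \<open>has_lower_frame_bound M F\<close> unfolding has_lower_frame_bound_def by blast
  have int: "integrable M (\<lambda>x. (norm (F x))\<^sup>2)"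
    using F unfolding square_integrable_def by blast
  define B where "B = A + (real CARD('n))\<^sup>2 * (\<integral>x. (norm (F x))\<^sup>2 \<partial>M)"
  have "A \<le> B" unfolding B_def by simp
  have upper: "(\<integral>\<^sup>+ x. ennreal ((cmod (cinner_n v (F x)))\<^sup>2) \<partial>M) \<le> ennreal (B * (norm v)\<^sup>2)" for v
    using \<open>A > 0\<close>
    by (intro order.trans[OF nn_integral_power2_norm_cinner_n_le[OF F]])
       (auto simp: B_def intro!: ennreal_leI mult_right_mono)
  have "(\<integral>\<^sup>+ x. ennreal ((norm (F x))\<^sup>2) \<partial>M) < \<infinity>"
    by (simp add: nn_integral_eq_integral[OF int])
  then show ?thesis
    unfolding cont_frame_def using square_integrable_measurable[OF F] \<open>A > 0\<close> \<open>A \<le> B\<close> lower upper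
    by blast
qed

lemma homogeneous_positive_bounded_below:
  fixes Q :: "'a::euclidean_space \<Rightarrow> real"
  assumes "continuous_on UNIV Q" and homogeneous: "\<And>r v. Q (r *\<^sub>R v) = r\<^sup>2 * Q v"
    and positive: "\<And>v. v \<noteq> 0 \<Longrightarrow> Q v > 0"
  obtains A where "A > 0" "\<And>v. A * (norm v)\<^sup>2 \<le> Q v"
proof -
  have "sphere (0::'a) 1 \<noteq> {}"
    using vector_choose_size[of 1] by auto
  then obtain u where u: "u \<in> sphere 0 1" and min: "\<And>w. w \<in> sphere 0 1 \<Longrightarrow> Q u \<le> Q w"
    using continuous_attains_inf[OF compact_sphere _ continuous_on_subset[OF assms(1)]]
    by blast
  show thesis
  proof
    show "Q u > 0" using u by (intro positive) auto
    show "Q u * (norm v)\<^sup>2 \<le> Q v" for v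
    proof (cases "v = 0")
      case True
      then show ?thesis using homogeneous[of 0 v] by simp
    next
      case False
      have "Q v = (norm v)\<^sup>2 * Q ((1 / norm v) *\<^sub>R v)"
        using homogeneous[of "norm v" "(1 / norm v) *\<^sub>R v"] False by simp
      moreover have "Q u \<le> Q ((1 / norm v) *\<^sub>R v)"
        using False by (intro min) simp
      ultimately show ?thesis by (metis mult.commute mult_right_mono zero_le_power2)
    qed
  qed
qed

text \<open>The map \<open>v \<mapsto> \<integral> |\<langle>v, F x\<rangle>|\<^sup>2\<close> is a Hermitian form with the Gram matrix of the
  components of \<open>F\<close>.\<close>
lemma continuous_on_integral_power2_norm_cinner_n:
  fixes F :: "'a \<Rightarrow> complex^'n::finite"
  assumes F: "square_integrable M F"
  shows "continuous_on UNIV (\<lambda>v. \<integral>x. (cmod (cinner_n v (F x)))\<^sup>2 \<partial>M)"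
proof -
  have [measurable]: "(\<lambda>x. F x $ k) \<in> borel_measurable M" for k
    using F by (rule square_integrable_measurable)
  have int: "integrable M (\<lambda>x. (norm (F x))\<^sup>2)"
    using F unfolding square_integrable_def by blast
  define a where "a j k = (\<integral>x. cnj (F x $ j) * F x $ k \<partial>M)" for j k
  have a_int: "integrable M (\<lambda>x. cnj (F x $ j) * F x $ k)" for j k
    by (rule Bochner_Integration.integrable_bound[OF int])
       (auto intro!: AE_I2 mult_mono Finite_Cartesian_Product.norm_nth_le
         simp: norm_mult power2_eq_square)
  have Gram: "(\<integral>x. (cmod (cinner_n v (F x)))\<^sup>2 \<partial>M) = Re (\<Sum>j\<in>UNIV. \<Sum>k\<in>UNIV. v$j * cnj (v$k) * a j k)"
    for v
  proof -
    have "complex_of_real ((cmod (cinner_n v (F x)))\<^sup>2)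
        = (\<Sum>j\<in>UNIV. \<Sum>k\<in>UNIV. v$j * cnj (v$k) * (cnj (F x $ j) * F x $ k))" for x
      unfolding complex_norm_square cinner_n_def by (simp add: sum_product algebra_simps)
    then have "complex_of_real (\<integral>x. (cmod (cinner_n v (F x)))\<^sup>2 \<partial>M)
        = (\<Sum>j\<in>UNIV. \<Sum>k\<in>UNIV. v$j * cnj (v$k) * a j k)"
      unfolding integral_of_real[OF integrable_power2_norm_cinner_n[OF F], symmetric] a_def
      by (simp add: integral_sum a_int)
    then show ?thesis by (metis Re_complex_of_real)
  qed
  show ?thesis
    unfolding Gram by (intro continuous_intros)
qed

lemma definite_imp_has_lower_frame_bound:
  fixes F :: "'a \<Rightarrow> complex^'n::finite"
  assumes F: "square_integrable M F"
    and definite: "\<And>v. (AE x in M. cinner_n v (F x) = 0) \<Longrightarrow> v = 0"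
  shows "has_lower_frame_bound M F"
proof -
  define Q where "Q v = (\<integral>x. (cmod (cinner_n v (F x)))\<^sup>2 \<partial>M)" for v
  have Q_int: "integrable M (\<lambda>x. (cmod (cinner_n v (F x)))\<^sup>2)" for v
    using F by (rule integrable_power2_norm_cinner_n)
  have Q_continuous: "continuous_on UNIV Q"
    unfolding Q_def by (rule continuous_on_integral_power2_norm_cinner_n[OF F])
  have Q_homogeneous: "Q (r *\<^sub>R v) = r\<^sup>2 * Q v" for r v
    unfolding Q_def cinner_n_scaleR_left by (simp add: norm_mult power_mult_distrib)
  have Q_positive: "Q v > 0" if "v \<noteq> 0" for v
  proof -
    have "Q v \<noteq> 0"
    proof
      assume "Q v = 0"
      then have "AE x in M. (cmod (cinner_n v (F x)))\<^sup>2 = 0"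
        using integral_nonneg_eq_0_iff_AE[OF Q_int] by (simp add: Q_def)
      then have "v = 0" by (intro definite) simp
      with that show False ..
    qed
    moreover have "Q v \<ge> 0" unfolding Q_def by simp
    ultimately show ?thesis by simp
  qed
  obtain A where "A > 0" and A: "\<And>v. A * (norm v)\<^sup>2 \<le> Q v"
    using homogeneous_positive_bounded_below[OF Q_continuous Q_homogeneous Q_positive] by blast
  have "ennreal (A * (norm v)\<^sup>2) \<le> (\<integral>\<^sup>+ x. ennreal ((cmod (cinner_n v (F x)))\<^sup>2) \<partial>M)" for v
    using A[of v] by (simp add: nn_integral_eq_integral[OF Q_int] Q_def)
  with \<open>A > 0\<close> show ?thesis
    unfolding has_lower_frame_bound_def by blast
qed

lemma has_lower_frame_bound_definite:
  fixes F :: "'a \<Rightarrow> complex^'n::finite"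
  assumes "has_lower_frame_bound M F" and "AE x in M. cinner_n v (F x) = 0"
  shows "v = 0"
proof -
  obtain A where "A > 0"
    and lower: "ennreal (A * (norm v)\<^sup>2) \<le> (\<integral>\<^sup>+ x. ennreal ((cmod (cinner_n v (F x)))\<^sup>2) \<partial>M)"
    using assms(1) unfolding has_lower_frame_bound_def by blast
  have "AE x in M. ennreal ((cmod (cinner_n v (F x)))\<^sup>2) = 0"
    using assms(2) by eventually_elim simp
  then have "(\<integral>\<^sup>+ x. ennreal ((cmod (cinner_n v (F x)))\<^sup>2) \<partial>M) = 0"
    using nn_integral_cong_AE by fastforce
  with lower \<open>A > 0\<close> show "v = 0" by simp
qed

lemma L2_dim_ge_obtain_frame_supported:
  assumes [measurable]: "Y \<in> sets M" and "L2_dim_ge M Y TYPE('n::finite)"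
  obtains P :: "'a \<Rightarrow> complex^'n"
  where "square_integrable M P" "\<And>x. x \<notin> Y \<Longrightarrow> P x = 0" "has_lower_frame_bound M P"
proof -
  from assms(2) obtain f :: "'n \<Rightarrow> 'a \<Rightarrow> complex" where
    [measurable]: "\<And>i. f i \<in> borel_measurable M" and
    fin: "\<And>i. (\<integral>\<^sup>+ x\<in>Y. ennreal ((cmod (f i x))\<^sup>2) \<partial>M) < \<infinity>" and
    indep: "\<And>c. (AE x in M. x \<in> Y \<longrightarrow> (\<Sum>i\<in>UNIV. c i * f i x) = 0) \<Longrightarrow> \<forall>i. c i = 0"
    unfolding L2_dim_ge_def by blast
  define P where "P x = (\<chi> k. indicator Y x * cnj (f k x))" for x
  have P_nth: "P x $ k = indicator Y x * cnj (f k x)" for x k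
    by (simp add: P_def)
  have [measurable]: "(\<lambda>x. P x $ k) \<in> borel_measurable M" for k
    unfolding P_nth by measurable
  have "(\<integral>\<^sup>+ x. ennreal (norm ((norm (P x))\<^sup>2)) \<partial>M)
      = (\<Sum>k\<in>UNIV. (\<integral>\<^sup>+ x. ennreal ((cmod (f k x))\<^sup>2) * indicator Y x \<partial>M))"
    unfolding power2_norm_vec P_nth
    by (subst nn_integral_sum[symmetric])
       (auto intro!: nn_integral_cong simp: sum_nonneg split: split_indicator)
  also have "\<dots> < \<infinity>" using fin by simp
  finally have "square_integrable M P"
    unfolding square_integrable_def by (simp add: integrable_iff_bounded)
  moreover have "v = 0" if "AE x in M. cinner_n v (P x) = 0" for v
  proof -
    have cinner_P: "cinner_n v (P x) = indicator Y x * (\<Sum>i\<in>UNIV. v$i * f i x)" for x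
      unfolding cinner_n_def P_nth by (cases "x \<in> Y") simp_all
    have "AE x in M. x \<in> Y \<longrightarrow> (\<Sum>i\<in>UNIV. v$i * f i x) = 0"
      using that by eventually_elim (auto simp: cinner_P indicator_def)
    then show "v = 0" using indep[of "\<lambda>i. v $ i"] by (simp add: vec_eq_iff)
  qed
  ultimately have "has_lower_frame_bound M P"
    by (rule definite_imp_has_lower_frame_bound)
  moreover have "x \<notin> Y \<Longrightarrow> P x = 0" for x
    by (simp add: vec_eq_iff P_nth)
  ultimately show thesis using that \<open>square_integrable M P\<close> by blast
qed

section \<open>Pieces of positive measure and their integrals\<close>

text \<open>\<open>S\<close> is covered by the countably many sets \<open>S \<inter> A\<^sub>i \<inter> {f \<ge> 1/(m+1)}\<close> with
  \<open>A\<^sub>i\<close> of finite measure; they cannot all be null.\<close>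
lemma (in sigma_finite_measure) obtain_finite_subset_bounded_below:
  assumes S[measurable]: "S \<in> sets M" and [measurable]: "f \<in> borel_measurable M"
    and "emeasure M S > 0" and f_pos: "\<And>x. x \<in> S \<Longrightarrow> (f x :: real) > 0"
  obtains T \<delta> where "T \<in> sets M" "T \<subseteq> S" "emeasure M T > 0" "emeasure M T < \<infinity>" "\<delta> > 0"
    "\<And>x. x \<in> T \<Longrightarrow> \<delta> \<le> f x"
proof (rule ccontr)
  assume no_subset: "\<not> thesis"
  obtain A :: "nat \<Rightarrow> 'a set" where A: "range A \<subseteq> sets M" "(\<Union>i. A i) = space M"
    "\<And>i. emeasure M (A i) \<noteq> \<infinity>"
    using sigma_finite by metis
  have [measurable]: "A i \<in> sets M" for i using A(1) by auto
  define T where "T i m = S \<inter> A i \<inter> {x \<in> space M. 1 / real (Suc m) \<le> f x}" for i m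
  have [measurable]: "T i m \<in> sets M" for i m unfolding T_def by measurable
  have "T i m \<in> null_sets M" for i m
  proof -
    have "emeasure M (T i m) \<le> emeasure M (A i)" by (rule emeasure_mono) (auto simp: T_def)
    then have "emeasure M (T i m) < \<infinity>"
      using A(3)[of i] by (simp add: le_less_trans less_top)
    moreover have "T i m \<subseteq> S" "\<And>x. x \<in> T i m \<Longrightarrow> 1 / real (Suc m) \<le> f x"
      unfolding T_def by auto
    ultimately have "emeasure M (T i m) = 0"
      using that[of "T i m" "1 / real (Suc m)"] no_subset by (auto simp: zero_less_iff_neq_zero)
    then show ?thesis by (simp add: null_sets_def)
  qed
  then have "(\<Union>i. \<Union>m. T i m) \<in> null_sets M" by auto
  moreover have "S \<subseteq> (\<Union>i. \<Union>m. T i m)"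
  proof
    fix x assume "x \<in> S"
    then have "x \<in> space M" using sets.sets_into_space[OF S] by auto
    then obtain i where "x \<in> A i" using A(2) by auto
    obtain n where "n > 0" "inverse (real n) < f x"
      using ex_inverse_of_nat_less[OF f_pos[OF \<open>x \<in> S\<close>]] by auto
    then have "x \<in> T i (n - 1)"
      using \<open>x \<in> S\<close> \<open>x \<in> space M\<close> \<open>x \<in> A i\<close> by (auto simp: T_def inverse_eq_divide)
    then show "x \<in> (\<Union>i. \<Union>m. T i m)" by blast
  qed
  ultimately have "S \<in> null_sets M" using null_sets_subset S by blast
  then show False using \<open>emeasure M S > 0\<close> by (simp add: null_sets_def)
qed

lemma integrable_indicator_mult_bounded:
  fixes h :: "'a \<Rightarrow> complex"
  assumes [measurable]: "h \<in> borel_measurable M" and h_bounded: "AE x in M. cmod (h x) \<le> C"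
    and [measurable]: "T \<in> sets M" and "emeasure M T < \<infinity>"
  shows "integrable M (\<lambda>x. indicator T x * h x)"
proof (rule Bochner_Integration.integrable_bound[where f = "\<lambda>x. indicator T x * max C 0"])
  show "integrable M (\<lambda>x. indicator T x * max C 0 :: real)"
    using integrable_real_indicator[OF assms(3,4)] by auto
  show "AE x in M. norm (indicator T x * h x) \<le> norm (indicator T x * max C 0 :: real)"
    using h_bounded by eventually_elim (auto split: split_indicator)
qed measurable

lemma bounded_linear_integral_indicator_ge:
  fixes h :: "'a \<Rightarrow> complex" and \<psi> :: "complex \<Rightarrow> real"
  assumes "bounded_linear \<psi>" and int: "integrable M (\<lambda>x. indicator T x * h x)"
    and "T \<in> sets M" "emeasure M T < \<infinity>" and ge: "\<And>x. x \<in> T \<Longrightarrow> \<delta> \<le> \<psi> (h x)"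
  shows "\<delta> * measure M T \<le> \<psi> (\<integral>x. indicator T x * h x \<partial>M)"
proof -
  have "\<delta> * measure M T = (\<integral>x. indicator T x * \<delta> \<partial>M)"
    using assms(3,4) by (simp add: less_top)
  also have "\<dots> \<le> (\<integral>x. \<psi> (indicator T x * h x) \<partial>M)"
  proof (rule integral_mono)
    show "integrable M (\<lambda>x. indicator T x * \<delta>)"
      using integrable_real_indicator[OF assms(3,4)] by auto
    show "integrable M (\<lambda>x. \<psi> (indicator T x * h x))"
      by (rule integrable_bounded_linear[OF assms(1) int])
    show "indicator T x * \<delta> \<le> \<psi> (indicator T x * h x)" for x
      using ge linear_0[OF bounded_linear.linear[OF assms(1)]] by (simp split: split_indicator)
  qed
  also have "\<dots> = \<psi> (\<integral>x. indicator T x * h x \<partial>M)"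
    by (rule integral_bounded_linear[OF assms(1) int])
  finally show ?thesis .
qed

lemma (in sigma_finite_measure) obtain_subset_integral_positive:
  fixes h :: "'a \<Rightarrow> complex" and \<psi>\<^sub>1 \<psi>\<^sub>2 :: "complex \<Rightarrow> real"
  assumes h[measurable]: "h \<in> borel_measurable M" and h_bounded: "AE x in M. cmod (h x) \<le> C"
    and \<psi>: "bounded_linear \<psi>\<^sub>1" "bounded_linear \<psi>\<^sub>2"
    and [measurable]: "S \<in> sets M" and "emeasure M S > 0"
    and pos: "\<And>x. x \<in> S \<Longrightarrow> \<psi>\<^sub>1 (h x) > 0 \<and> \<psi>\<^sub>2 (h x) > 0"
  obtains T where "T \<in> sets M" "T \<subseteq> S" "emeasure M T < \<infinity>"
    "\<psi>\<^sub>1 (\<integral>x. indicator T x * h x \<partial>M) > 0" "\<psi>\<^sub>2 (\<integral>x. indicator T x * h x \<partial>M) > 0"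
proof -
  have [measurable]: "(\<lambda>x. \<psi>\<^sub>1 (h x)) \<in> borel_measurable M" "(\<lambda>x. \<psi>\<^sub>2 (h x)) \<in> borel_measurable M"
    by (rule borel_measurable_continuous_on[OF linear_continuous_on[OF \<psi>(1)] h],
        rule borel_measurable_continuous_on[OF linear_continuous_on[OF \<psi>(2)] h])
  have "(\<lambda>x. min (\<psi>\<^sub>1 (h x)) (\<psi>\<^sub>2 (h x))) \<in> borel_measurable M"
    by measurable
  moreover have "\<And>x. x \<in> S \<Longrightarrow> min (\<psi>\<^sub>1 (h x)) (\<psi>\<^sub>2 (h x)) > 0"
    using pos by simp
  ultimately obtain T \<delta> where [measurable]: "T \<in> sets M" and "T \<subseteq> S" "emeasure M T > 0"
    "emeasure M T < \<infinity>" "\<delta> > 0" and \<delta>: "\<And>x. x \<in> T \<Longrightarrow> \<delta> \<le> min (\<psi>\<^sub>1 (h x)) (\<psi>\<^sub>2 (h x))"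
    using obtain_finite_subset_bounded_below[OF \<open>S \<in> sets M\<close> _ \<open>emeasure M S > 0\<close>] by blast
  have int: "integrable M (\<lambda>x. indicator T x * h x)"
    by (rule integrable_indicator_mult_bounded[OF h h_bounded]) fact+
  have "measure M T > 0"
    using \<open>emeasure M T > 0\<close> \<open>emeasure M T < \<infinity>\<close> emeasure_eq_ennreal_measure[of M T]
    by (auto simp: less_top)
  have "\<psi> (\<integral>x. indicator T x * h x \<partial>M) > 0"
    if "bounded_linear \<psi>" "\<And>x. x \<in> T \<Longrightarrow> \<delta> \<le> \<psi> (h x)" for \<psi>
    using bounded_linear_integral_indicator_ge[OF that(1) int \<open>T \<in> sets M\<close> \<open>emeasure M T < \<infinity>\<close> that(2)]
      mult_pos_pos[OF \<open>\<delta> > 0\<close> \<open>measure M T > 0\<close>] by linarith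
  then show thesis
    using that[of T] \<delta> \<psi> \<open>T \<subseteq> S\<close> \<open>emeasure M T < \<infinity>\<close> by auto
qed

section \<open>Weights vanishing on \<open>Y\<close>\<close>

definition weight_vanishing_on :: "'a measure \<Rightarrow> 'a set \<Rightarrow> ('a \<Rightarrow> real) \<Rightarrow> bool" where
  "weight_vanishing_on M Y G \<longleftrightarrow>
     G \<in> borel_measurable M \<and> (\<forall>x. 0 \<le> G x) \<and> (\<forall>x\<in>Y. G x = 0) \<and> integrable M G"

lemma integrable_weight_mult_bounded:
  fixes h :: "'a \<Rightarrow> complex"
  assumes [measurable]: "h \<in> borel_measurable M" and h_bounded: "AE x in M. cmod (h x) \<le> C"
    and G: "weight_vanishing_on M Y G"
  shows "integrable M (\<lambda>x. of_real (G x) * h x)"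
proof (rule Bochner_Integration.integrable_bound)
  have [measurable]: "G \<in> borel_measurable M" and G_nonneg: "\<And>x. 0 \<le> G x"
    using G unfolding weight_vanishing_on_def by blast+
  show "integrable M (\<lambda>x. max C 0 * G x)"
    using G unfolding weight_vanishing_on_def by auto
  show "(\<lambda>x. of_real (G x) * h x) \<in> borel_measurable M" by measurable
  show "AE x in M. norm (of_real (G x) * h x) \<le> norm (max C 0 * G x)"
    using h_bounded
  proof eventually_elim
    case (elim x)
    then have "G x * cmod (h x) \<le> G x * max C 0"
      using G_nonneg[of x] by (intro mult_left_mono) auto
    then show ?case using G_nonneg[of x] by (simp add: norm_mult abs_mult mult.commute)
  qed
qed

text \<open>With \<open>z\<^sub>i = c \<integral>\<^bsub>T\<^sub>i\<^esub> h\<close>, the weights \<open>Im z\<^sub>2\<close> on \<open>T\<^sub>1\<close> and \<open>-Im z\<^sub>1\<close> on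
  \<open>T\<^sub>2\<close> cancel the imaginary parts.\<close>
lemma obtain_weight_two_pieces:
  fixes h :: "'a \<Rightarrow> complex" and c :: complex
  assumes h: "h \<in> borel_measurable M" and h_bounded: "AE x in M. cmod (h x) \<le> C"
    and [measurable]: "T\<^sub>1 \<in> sets M" "T\<^sub>2 \<in> sets M"
    and finite: "emeasure M T\<^sub>1 < \<infinity>" "emeasure M T\<^sub>2 < \<infinity>"
    and disjoint: "T\<^sub>1 \<inter> Y = {}" "T\<^sub>2 \<inter> Y = {}"
    and H\<^sub>1: "Re (c * (\<integral>x. indicator T\<^sub>1 x * h x \<partial>M)) > 0" "Im (c * (\<integral>x. indicator T\<^sub>1 x * h x \<partial>M)) < 0"
    and H\<^sub>2: "Re (c * (\<integral>x. indicator T\<^sub>2 x * h x \<partial>M)) > 0" "Im (c * (\<integral>x. indicator T\<^sub>2 x * h x \<partial>M)) > 0"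
  obtains G \<kappa> where "weight_vanishing_on M Y G" "\<kappa> > 0"
    "c * (\<integral>x. of_real (G x) * h x \<partial>M) = of_real \<kappa>"
proof -
  define z\<^sub>1 where "z\<^sub>1 = c * (\<integral>x. indicator T\<^sub>1 x * h x \<partial>M)"
  define z\<^sub>2 where "z\<^sub>2 = c * (\<integral>x. indicator T\<^sub>2 x * h x \<partial>M)"
  define G where "G x = Im z\<^sub>2 * indicator T\<^sub>1 x - Im z\<^sub>1 * indicator T\<^sub>2 x" for x
  have "weight_vanishing_on M Y G"
    unfolding weight_vanishing_on_def G_def
    using H\<^sub>1 H\<^sub>2 disjoint integrable_real_indicator[OF _ finite(1)] integrable_real_indicator[OF _ finite(2)]
    by (auto simp: z\<^sub>1_def z\<^sub>2_def split: split_indicator)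
  have "(\<integral>x. of_real (G x) * h x \<partial>M)
      = (\<integral>x. of_real (Im z\<^sub>2) * (indicator T\<^sub>1 x * h x) - of_real (Im z\<^sub>1) * (indicator T\<^sub>2 x * h x) \<partial>M)"
    by (rule Bochner_Integration.integral_cong) (auto simp: G_def algebra_simps split: split_indicator)
  also have "\<dots> = of_real (Im z\<^sub>2) * (\<integral>x. indicator T\<^sub>1 x * h x \<partial>M)
      - of_real (Im z\<^sub>1) * (\<integral>x. indicator T\<^sub>2 x * h x \<partial>M)"
    using integrable_indicator_mult_bounded[OF h h_bounded _ finite(1)]
      integrable_indicator_mult_bounded[OF h h_bounded _ finite(2)] by simp
  finally have "c * (\<integral>x. of_real (G x) * h x \<partial>M) = of_real (Im z\<^sub>2) * z\<^sub>1 - of_real (Im z\<^sub>1) * z\<^sub>2"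
    unfolding z\<^sub>1_def z\<^sub>2_def
    by (simp only: right_diff_distrib mult.left_commute[of c])
  also have "\<dots> = of_real (Im z\<^sub>2 * Re z\<^sub>1 - Im z\<^sub>1 * Re z\<^sub>2)"
    by (simp add: complex_eq_iff)
  finally have "c * (\<integral>x. of_real (G x) * h x \<partial>M) = of_real (Im z\<^sub>2 * Re z\<^sub>1 - Im z\<^sub>1 * Re z\<^sub>2)" .
  moreover have "Im z\<^sub>2 * Re z\<^sub>1 - Im z\<^sub>1 * Re z\<^sub>2 > 0"
    using H\<^sub>1 H\<^sub>2 mult_pos_pos[of "Im z\<^sub>2" "Re z\<^sub>1"] mult_neg_pos[of "Im z\<^sub>1" "Re z\<^sub>2"]
    unfolding z\<^sub>1_def z\<^sub>2_def by linarith
  ultimately show thesis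
    using that[OF \<open>weight_vanishing_on M Y G\<close>] by blast
qed

section \<open>The map \<open>q\<close>\<close>

lemma cinner_n_q_map:
  fixes h :: "'a \<Rightarrow> complex" and F :: "'a \<Rightarrow> complex^'n::finite"
  assumes h[measurable]: "h \<in> borel_measurable M" and h_bounded: "AE x in M. cmod (h x) \<le> C"
    and F: "square_integrable M F"
  shows "cinner_n b (q_map M h b F) = (\<integral>x. cnj (h x) * of_real ((cmod (cinner_n b (F x)))\<^sup>2) \<partial>M)"
proof -
  have [measurable]: "(\<lambda>x. F x $ k) \<in> borel_measurable M" for k
    using F by (rule square_integrable_measurable)
  have pointwise: "(\<Sum>k\<in>UNIV. b$k * cnj (h x * cinner_n b (F x) * F x $ k))
      = cnj (h x) * of_real ((cmod (cinner_n b (F x)))\<^sup>2)" for x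
  proof -
    have "(\<Sum>k\<in>UNIV. b$k * cnj (h x * c * F x $ k))
        = cnj (h x) * (cnj c * (\<Sum>k\<in>UNIV. b$k * cnj (F x $ k)))" for c
      by (simp add: sum_distrib_left mult_ac)
    moreover have "cnj c * c = of_real ((cmod c)\<^sup>2)" for c
      using complex_norm_square[of c] by (simp add: mult.commute)
    ultimately show ?thesis
      by (simp add: cinner_n_def[symmetric])
  qed
  have "cinner_n b (q_map M h b F) = (\<Sum>k\<in>UNIV. \<integral>x. b$k * cnj (h x * cinner_n b (F x) * F x $ k) \<partial>M)"
    unfolding cinner_n_def[of b "q_map M h b F"]
    by (simp only: q_map_def vec_lambda_beta Bochner_Integration.integral_cnj integral_mult_right_zero)
  also have "\<dots> = (\<integral>x. (\<Sum>k\<in>UNIV. b$k * cnj (h x * cinner_n b (F x) * F x $ k)) \<partial>M)"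
    by (rule Bochner_Integration.integral_sum[symmetric])
       (intro integrable_mult_right integrable_cnj integrable_q_map_integrand[OF h h_bounded F])
  finally show ?thesis by (simp only: pointwise)
qed

lemma integrable_Re_mult_power2_norm_cinner_n:
  fixes h :: "'a \<Rightarrow> complex" and F :: "'a \<Rightarrow> complex^'n::finite"
  assumes [measurable]: "h \<in> borel_measurable M" and h_bounded: "AE x in M. cmod (h x) \<le> C"
    and F: "square_integrable M F"
  shows "integrable M (\<lambda>x. Re (h x) * (cmod (cinner_n b (F x)))\<^sup>2)"
proof (rule Bochner_Integration.integrable_bound)
  have [measurable]: "(\<lambda>x. F x $ k) \<in> borel_measurable M" for k
    using F by (rule square_integrable_measurable)
  show "integrable M (\<lambda>x. max C 0 * (cmod (cinner_n b (F x)))\<^sup>2)"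
    using integrable_power2_norm_cinner_n[OF F] by simp
  show "AE x in M. norm (Re (h x) * (cmod (cinner_n b (F x)))\<^sup>2)
      \<le> norm (max C 0 * (cmod (cinner_n b (F x)))\<^sup>2)"
    using h_bounded
    by eventually_elim (auto simp: abs_mult intro!: mult_right_mono order.trans[OF abs_Re_le_cmod])
  show "(\<lambda>x. Re (h x) * (cmod (cinner_n b (F x)))\<^sup>2) \<in> borel_measurable M"
    by measurable
qed

lemma cinner_n_q_map_real:
  fixes h :: "'a \<Rightarrow> complex" and P :: "'a \<Rightarrow> complex^'n::finite"
  assumes h[measurable]: "h \<in> borel_measurable M" and h_bounded: "AE x in M. cmod (h x) \<le> C"
    and P: "square_integrable M P" and P_vanishes: "\<And>x. x \<notin> Y \<Longrightarrow> P x = 0"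
    and h_real: "AE x in M. x \<in> Y \<longrightarrow> h x \<in> \<real>"
  shows "cinner_n b (q_map M h b P) = of_real (\<integral>x. Re (h x) * (cmod (cinner_n b (P x)))\<^sup>2 \<partial>M)"
proof -
  have [measurable]: "(\<lambda>x. P x $ k) \<in> borel_measurable M" for k
    using P by (rule square_integrable_measurable)
  have "cinner_n b (q_map M h b P) = (\<integral>x. cnj (h x) * of_real ((cmod (cinner_n b (P x)))\<^sup>2) \<partial>M)"
    by (rule cinner_n_q_map[OF h h_bounded P])
  also have "\<dots> = (\<integral>x. of_real (Re (h x) * (cmod (cinner_n b (P x)))\<^sup>2) \<partial>M)"
  proof (rule integral_cong_AE)
    show "AE x in M. cnj (h x) * of_real ((cmod (cinner_n b (P x)))\<^sup>2)
        = of_real (Re (h x) * (cmod (cinner_n b (P x)))\<^sup>2)"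
      using h_real by eventually_elim (auto simp: P_vanishes complex_eq_iff complex_is_Real_iff)
  qed measurable
  also have "\<dots> = of_real (\<integral>x. Re (h x) * (cmod (cinner_n b (P x)))\<^sup>2 \<partial>M)"
    by (rule integral_of_real[OF integrable_Re_mult_power2_norm_cinner_n[OF h h_bounded P]])
  finally show ?thesis .
qed

lemma cinner_n_q_map_negative:
  fixes h :: "'a \<Rightarrow> complex" and P :: "'a \<Rightarrow> complex^'n::finite"
  assumes h: "h \<in> borel_measurable M" and h_bounded: "AE x in M. cmod (h x) \<le> C"
    and P: "square_integrable M P" and P_vanishes: "\<And>x. x \<notin> Y \<Longrightarrow> P x = 0"
    and "has_lower_frame_bound M P" and "b \<noteq> 0"
    and h_negative: "AE x in M. x \<in> Y \<longrightarrow> h x \<in> \<real> \<and> Re (h x) < 0"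
  obtains \<rho> where "\<rho> > 0" "cinner_n b (q_map M h b P) = - of_real \<rho>"
proof -
  define W where "W x = (cmod (cinner_n b (P x)))\<^sup>2" for x
  define \<rho> where "\<rho> = - (\<integral>x. Re (h x) * W x \<partial>M)"
  have "AE x in M. x \<in> Y \<longrightarrow> h x \<in> \<real>"
    using h_negative by eventually_elim simp
  then have "cinner_n b (q_map M h b P) = - of_real \<rho>"
    unfolding \<rho>_def W_def by (simp add: cinner_n_q_map_real[OF h h_bounded P P_vanishes])
  moreover have int: "integrable M (\<lambda>x. - Re (h x) * W x)"
    unfolding W_def using integrable_Re_mult_power2_norm_cinner_n[OF h h_bounded P] by simp
  have nonneg: "AE x in M. 0 \<le> - Re (h x) * W x"
    using h_negative
  proof eventually_elim
    case (elim x)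
    show ?case
    proof (cases "x \<in> Y")
      case True
      then show ?thesis using elim by (auto simp: W_def intro!: mult_nonpos_nonneg)
    qed (simp add: W_def P_vanishes)
  qed
  have "\<rho> \<noteq> 0"
  proof
    assume "\<rho> = 0"
    then have "AE x in M. - Re (h x) * W x = 0"
      using integral_nonneg_eq_0_iff_AE[OF int nonneg] by (simp add: \<rho>_def)
    then have "AE x in M. cinner_n b (P x) = 0"
      using h_negative by eventually_elim (auto simp: P_vanishes W_def)
    with \<open>has_lower_frame_bound M P\<close> \<open>b \<noteq> 0\<close> show False
      using has_lower_frame_bound_definite by blast
  qed
  moreover have "\<rho> \<ge> 0" using integral_nonneg_AE[OF nonneg] by (simp add: \<rho>_def)
  ultimately show thesis using that by simp
qed

section \<open>Prescribing the value of \<open>q\<close>\<close>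

lemma open_obtain_small_shift:
  fixes c \<beta> :: "'a::real_normed_vector"
  assumes "open U" "c \<in> U"
  obtains \<tau> where "\<tau> > 0" "c - \<tau> *\<^sub>R \<beta> \<in> U"
proof -
  have "((\<lambda>\<tau>::real. c - \<tau> *\<^sub>R \<beta>) \<longlongrightarrow> c) (at_right 0)"
    by (auto intro!: tendsto_eq_intros)
  then have "\<forall>\<^sub>F \<tau> in at_right 0. c - \<tau> *\<^sub>R \<beta> \<in> U"
    using assms topological_tendstoD by blast
  moreover have "\<forall>\<^sub>F \<tau> in at_right (0::real). 0 < \<tau>"
    by (rule eventually_at_right_less)
  ultimately have "\<forall>\<^sub>F \<tau> in at_right 0. 0 < \<tau> \<and> c - \<tau> *\<^sub>R \<beta> \<in> U"
    by eventually_elim simp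
  then show thesis
    using that eventually_happens'[OF trivial_limit_at_right_real] by blast
qed

lemma cont_frame_disjoint_sum:
  fixes P :: "'a \<Rightarrow> complex^'n::finite"
  assumes P: "square_integrable M P" and P_vanishes: "\<And>x. x \<notin> Y \<Longrightarrow> P x = 0"
    and "has_lower_frame_bound M P" and G: "weight_vanishing_on M Y G" and "t \<noteq> 0"
  shows "cont_frame M (\<lambda>x. t *\<^sub>R P x + sqrt (G x) *\<^sub>R w)"
proof (rule cont_frameI)
  have [measurable]: "(\<lambda>x. P x $ k) \<in> borel_measurable M" for k
    using P by (rule square_integrable_measurable)
  have [measurable]: "G \<in> borel_measurable M" and G_nonneg: "\<And>x. 0 \<le> G x"
    and G_vanishes: "\<And>x. x \<in> Y \<Longrightarrow> G x = 0" and "integrable M G"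
    using G unfolding weight_vanishing_on_def by blast+
  have "(norm (t *\<^sub>R P x + sqrt (G x) *\<^sub>R w))\<^sup>2 = t\<^sup>2 * (norm (P x))\<^sup>2 + G x * (norm w)\<^sup>2" for x
    using G_nonneg[of x] P_vanishes[of x] G_vanishes[of x]
    by (cases "x \<in> Y") (simp_all add: power_mult_distrib)
  then show "square_integrable M (\<lambda>x. t *\<^sub>R P x + sqrt (G x) *\<^sub>R w)"
    using P \<open>integrable M G\<close> unfolding square_integrable_def by simp
  obtain A where "A > 0"
    and lower: "\<And>v. ennreal (A * (norm v)\<^sup>2) \<le> (\<integral>\<^sup>+ x. ennreal ((cmod (cinner_n v (P x)))\<^sup>2) \<partial>M)"
    using \<open>has_lower_frame_bound M P\<close> unfolding has_lower_frame_bound_def by blast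
  have "ennreal (t\<^sup>2 * A * (norm v)\<^sup>2)
      \<le> (\<integral>\<^sup>+ x. ennreal ((cmod (cinner_n v (t *\<^sub>R P x + sqrt (G x) *\<^sub>R w)))\<^sup>2) \<partial>M)" for v
  proof -
    have "ennreal (t\<^sup>2 * A * (norm v)\<^sup>2) \<le> ennreal (t\<^sup>2) * (\<integral>\<^sup>+ x. ennreal ((cmod (cinner_n v (P x)))\<^sup>2) \<partial>M)"
      using mult_left_mono[OF lower, of "ennreal (t\<^sup>2)"] \<open>A > 0\<close>
      by (simp add: ennreal_mult[symmetric] mult.assoc)
    also have "\<dots> = (\<integral>\<^sup>+ x. ennreal ((cmod (cinner_n v (t *\<^sub>R P x)))\<^sup>2) \<partial>M)"
      by (simp add: nn_integral_cmult[symmetric] cinner_n_scaleR_right norm_mult power_mult_distrib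
          ennreal_mult)
    also have "\<dots> \<le> (\<integral>\<^sup>+ x. ennreal ((cmod (cinner_n v (t *\<^sub>R P x + sqrt (G x) *\<^sub>R w)))\<^sup>2) \<partial>M)"
      by (intro nn_integral_mono, case_tac "x \<in> Y") (simp_all add: P_vanishes G_vanishes)
    finally show ?thesis .
  qed
  moreover have "t\<^sup>2 * A > 0" using \<open>A > 0\<close> \<open>t \<noteq> 0\<close> by simp
  ultimately show "has_lower_frame_bound M (\<lambda>x. t *\<^sub>R P x + sqrt (G x) *\<^sub>R w)"
    unfolding has_lower_frame_bound_def by blast
qed

lemma q_map_disjoint_sum:
  fixes h :: "'a \<Rightarrow> complex" and P :: "'a \<Rightarrow> complex^'n::finite"
  assumes h: "h \<in> borel_measurable M" and h_bounded: "AE x in M. cmod (h x) \<le> C"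
    and P: "square_integrable M P" and P_vanishes: "\<And>x. x \<notin> Y \<Longrightarrow> P x = 0"
    and G: "weight_vanishing_on M Y G"
  shows "q_map M h b (\<lambda>x. t *\<^sub>R P x + sqrt (G x) *\<^sub>R w) =
    (\<chi> k. of_real (t\<^sup>2) * q_map M h b P $ k + cinner_n b w * (\<integral>x. of_real (G x) * h x \<partial>M) * w $ k)"
proof -
  have G_nonneg: "\<And>x. 0 \<le> G x" and G_vanishes: "\<And>x. x \<in> Y \<Longrightarrow> G x = 0"
    using G unfolding weight_vanishing_on_def by blast+
  have pointwise: "h x * cinner_n b (t *\<^sub>R P x + sqrt (G x) *\<^sub>R w) * (t *\<^sub>R P x + sqrt (G x) *\<^sub>R w) $ k
      = of_real (t\<^sup>2) * (h x * cinner_n b (P x) * P x $ k)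
        + cinner_n b w * w $ k * (of_real (G x) * h x)" for x k
  proof (cases "x \<in> Y")
    case True
    then show ?thesis
      by (simp add: G_vanishes cinner_n_scaleR_right scaleR_conv_of_real[where 'a = complex] power2_eq_square mult_ac)
  next
    case False
    have "of_real (sqrt (G x)) * of_real (sqrt (G x)) = (of_real (G x) :: complex)"
      using G_nonneg[of x] by (simp flip: of_real_mult)
    then show ?thesis
      using False
      by (simp add: P_vanishes cinner_n_scaleR_right scaleR_conv_of_real[where 'a = complex] mult_ac)
  qed
  have "(\<integral>x. of_real (t\<^sup>2) * (h x * cinner_n b (P x) * P x $ k)
        + cinner_n b w * w $ k * (of_real (G x) * h x) \<partial>M)
      = of_real (t\<^sup>2) * q_map M h b P $ k + cinner_n b w * w $ k * (\<integral>x. of_real (G x) * h x \<partial>M)" for k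
    using integrable_q_map_integrand[OF h h_bounded P] integrable_weight_mult_bounded[OF h h_bounded G]
    by (simp add: q_map_def)
  then show ?thesis
    unfolding vec_eq_iff q_map_def[of M h b "\<lambda>x. t *\<^sub>R P x + sqrt (G x) *\<^sub>R w"] pointwise
    by (simp add: mult_ac)
qed

lemma exists_cont_frame_q_map_eq:
  fixes h :: "'a \<Rightarrow> complex" and P :: "'a \<Rightarrow> complex^'n::finite"
  assumes h: "h \<in> borel_measurable M" and h_bounded: "AE x in M. cmod (h x) \<le> C"
    and P: "square_integrable M P" and P_vanishes: "\<And>x. x \<notin> Y \<Longrightarrow> P x = 0"
    and lower: "has_lower_frame_bound M P"
    and G: "weight_vanishing_on M Y G" and "t > 0" and "\<kappa> > 0"
    and \<kappa>: "cinner_n b (d - t\<^sup>2 *\<^sub>R q_map M h b P) * (\<integral>x. of_real (G x) * h x \<partial>M) = of_real \<kappa>"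
  shows "\<exists>\<Phi> :: 'a \<Rightarrow> complex^'n. cont_frame M \<Phi> \<and> q_map M h b \<Phi> = d"
proof -
  define d' where "d' = d - t\<^sup>2 *\<^sub>R q_map M h b P"
  define s where "s = 1 / sqrt \<kappa>"
  define w where "w = s *\<^sub>R d'"
  have w_term: "cinner_n b w * (\<integral>x. of_real (G x) * h x \<partial>M) * w $ k = d' $ k" for k
  proof -
    have "cinner_n b w * (\<integral>x. of_real (G x) * h x \<partial>M) * w $ k
        = of_real (s * s) * (cinner_n b d' * (\<integral>x. of_real (G x) * h x \<partial>M)) * d' $ k"
      by (simp add: w_def cinner_n_scaleR_right scaleR_conv_of_real[where 'a = complex] mult_ac)
    also have "\<dots> = of_real (s * s * \<kappa>) * d' $ k"
      unfolding d'_def \<kappa> by simp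
    also have "s * s * \<kappa> = 1"
      using \<open>\<kappa> > 0\<close> by (simp add: s_def)
    finally show ?thesis by simp
  qed
  have "q_map M h b (\<lambda>x. t *\<^sub>R P x + sqrt (G x) *\<^sub>R w) = d"
    by (simp add: q_map_disjoint_sum[OF h h_bounded P P_vanishes G] vec_eq_iff w_term d'_def
        scaleR_conv_of_real[where 'a = complex])
  moreover have "cont_frame M (\<lambda>x. t *\<^sub>R P x + sqrt (G x) *\<^sub>R w)"
    using \<open>t > 0\<close> by (intro cont_frame_disjoint_sum[OF P P_vanishes lower G]) auto
  ultimately show ?thesis by blast
qed

lemma (in sigma_finite_measure) obtain_quadrant_pieces:
  fixes h :: "'a \<Rightarrow> complex" and c :: complex
  assumes h[measurable]: "h \<in> borel_measurable M" and h_bounded: "AE x in M. cmod (h x) \<le> C"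
    and [measurable]: "Y \<in> sets M" "B1 \<in> sets borel" "B2 \<in> sets borel"
    and B1: "B1 \<subseteq> {z. Re (c * z) > 0 \<and> Im (c * z) < 0}"
    and B2: "B2 \<subseteq> {z. Re (c * z) > 0 \<and> Im (c * z) > 0}"
    and S\<^sub>1_pos: "emeasure M ((space M - Y) \<inter> (h -` B1 \<inter> space M)) > 0"
    and S\<^sub>2_pos: "emeasure M ((space M - Y) \<inter> (h -` B2 \<inter> space M)) > 0"
  obtains T\<^sub>1 T\<^sub>2 where "T\<^sub>1 \<in> sets M" "T\<^sub>2 \<in> sets M" "emeasure M T\<^sub>1 < \<infinity>" "emeasure M T\<^sub>2 < \<infinity>"
    "T\<^sub>1 \<inter> Y = {}" "T\<^sub>2 \<inter> Y = {}"
    "Re (c * (\<integral>x. indicator T\<^sub>1 x * h x \<partial>M)) > 0" "Im (c * (\<integral>x. indicator T\<^sub>1 x * h x \<partial>M)) < 0"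
    "Re (c * (\<integral>x. indicator T\<^sub>2 x * h x \<partial>M)) > 0" "Im (c * (\<integral>x. indicator T\<^sub>2 x * h x \<partial>M)) > 0"
proof -
  have Re_c: "bounded_linear (\<lambda>z. Re (c * z))" and Im_c: "bounded_linear (\<lambda>z. Im (c * z))"
    by (intro bounded_linear_compose[OF _ bounded_linear_mult_right] bounded_linear_Re bounded_linear_Im)+
  define S\<^sub>1 where "S\<^sub>1 = (space M - Y) \<inter> (h -` B1 \<inter> space M)"
  define S\<^sub>2 where "S\<^sub>2 = (space M - Y) \<inter> (h -` B2 \<inter> space M)"
  have [measurable]: "S\<^sub>1 \<in> sets M" "S\<^sub>2 \<in> sets M" unfolding S\<^sub>1_def S\<^sub>2_def by measurable
  have "\<And>x. x \<in> S\<^sub>1 \<Longrightarrow> Re (c * h x) > 0 \<and> - Im (c * h x) > 0"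
    using B1 unfolding S\<^sub>1_def by auto
  then obtain T\<^sub>1 where T\<^sub>1: "T\<^sub>1 \<in> sets M" "T\<^sub>1 \<subseteq> S\<^sub>1" "emeasure M T\<^sub>1 < \<infinity>"
      "Re (c * (\<integral>x. indicator T\<^sub>1 x * h x \<partial>M)) > 0" "- Im (c * (\<integral>x. indicator T\<^sub>1 x * h x \<partial>M)) > 0"
    using obtain_subset_integral_positive[OF h h_bounded Re_c bounded_linear_minus[OF Im_c]
        \<open>S\<^sub>1 \<in> sets M\<close> S\<^sub>1_pos[folded S\<^sub>1_def]]
    by blast
  have "\<And>x. x \<in> S\<^sub>2 \<Longrightarrow> Re (c * h x) > 0 \<and> Im (c * h x) > 0"
    using B2 unfolding S\<^sub>2_def by auto
  then obtain T\<^sub>2 where T\<^sub>2: "T\<^sub>2 \<in> sets M" "T\<^sub>2 \<subseteq> S\<^sub>2" "emeasure M T\<^sub>2 < \<infinity>"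
      "Re (c * (\<integral>x. indicator T\<^sub>2 x * h x \<partial>M)) > 0" "Im (c * (\<integral>x. indicator T\<^sub>2 x * h x \<partial>M)) > 0"
    using obtain_subset_integral_positive[OF h h_bounded Re_c Im_c \<open>S\<^sub>2 \<in> sets M\<close> S\<^sub>2_pos[folded S\<^sub>2_def]]
    by blast
  have "T\<^sub>1 \<inter> Y = {}" "T\<^sub>2 \<inter> Y = {}"
    using T\<^sub>1(2) T\<^sub>2(2) unfolding S\<^sub>1_def S\<^sub>2_def by auto
  moreover have "Im (c * (\<integral>x. indicator T\<^sub>1 x * h x \<partial>M)) < 0"
    using T\<^sub>1(5) by simp
  ultimately show thesis
    using that[OF T\<^sub>1(1) T\<^sub>2(1) T\<^sub>1(3) T\<^sub>2(3)] T\<^sub>1(4) T\<^sub>2(4,5) by blast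
qed

lemma (in sigma_finite_measure) obtain_weight_real_axis:
  fixes h :: "'a \<Rightarrow> complex"
  assumes h[measurable]: "h \<in> borel_measurable M" and h_bounded: "AE x in M. cmod (h x) \<le> C"
    and [measurable]: "Y \<in> sets M" "B \<in> sets borel" and B: "B \<subseteq> {z. Re z > 0 \<and> Im z = 0}"
    and S_pos: "emeasure M ((space M - Y) \<inter> (h -` B \<inter> space M)) > 0"
  obtains G \<kappa> where "weight_vanishing_on M Y G" "\<kappa> > 0" "(\<integral>x. of_real (G x) * h x \<partial>M) = of_real \<kappa>"
proof -
  define S where "S = (space M - Y) \<inter> (h -` B \<inter> space M)"
  have [measurable]: "S \<in> sets M" unfolding S_def by measurable
  have "\<And>x. x \<in> S \<Longrightarrow> Re (h x) > 0 \<and> Re (h x) > 0"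
    using B unfolding S_def by auto
  then obtain T where [measurable]: "T \<in> sets M" and "T \<subseteq> S" "emeasure M T < \<infinity>"
      "Re (\<integral>x. indicator T x * h x \<partial>M) > 0"
    using obtain_subset_integral_positive[OF h h_bounded bounded_linear_Re bounded_linear_Re
        \<open>S \<in> sets M\<close> S_pos[folded S_def]]
    by blast
  then have T: "T \<inter> Y = {}" "\<And>x. x \<in> T \<Longrightarrow> Im (h x) = 0"
    using B unfolding S_def by auto
  have int: "integrable M (\<lambda>x. indicator T x * h x)"
    by (rule integrable_indicator_mult_bounded[OF h h_bounded]) fact+
  have "Im (indicator T x * h x) = 0" for x
    using T(2) by (cases "x \<in> T") simp_all
  then have "Im (\<integral>x. indicator T x * h x \<partial>M) = 0"
    using integral_Im[OF int] by simp
  then have "(\<integral>x. indicator T x * h x \<partial>M) = of_real (Re (\<integral>x. indicator T x * h x \<partial>M))"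
    by (simp add: complex_eq_iff)
  moreover have "(\<integral>x. of_real (indicator T x) * h x \<partial>M) = (\<integral>x. indicator T x * h x \<partial>M)"
    by (rule Bochner_Integration.integral_cong) (simp_all split: split_indicator)
  ultimately have "(\<integral>x. of_real (indicator T x) * h x \<partial>M) = of_real (Re (\<integral>x. indicator T x * h x \<partial>M))"
    by (rule trans[rotated])
  moreover have "weight_vanishing_on M Y (indicator T)"
    unfolding weight_vanishing_on_def using T(1) integrable_real_indicator[OF _ \<open>emeasure M T < \<infinity>\<close>]
    by (auto split: split_indicator)
  ultimately show thesis
    using that \<open>Re (\<integral>x. indicator T x * h x \<partial>M) > 0\<close> by blast
qed

lemma (in sigma_finite_measure) obtain_weight_integral_positive_real:
  fixes h :: "'a \<Rightarrow> complex"
  assumes h: "h \<in> borel_measurable M" and h_bounded: "AE x in M. cmod (h x) \<le> C"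
    and Y: "Y \<in> sets M"
    and pieces: "(\<exists>B1 B2. B1 \<in> sets borel \<and> B2 \<in> sets borel \<and>
                B1 \<subseteq> {z. Re z > 0 \<and> Im z < 0} \<and> B2 \<subseteq> {z. Re z > 0 \<and> Im z > 0} \<and>
                emeasure M ((space M - Y) \<inter> (h -` B1 \<inter> space M)) > 0 \<and>
                emeasure M ((space M - Y) \<inter> (h -` B2 \<inter> space M)) > 0) \<or>
             (\<exists>B3. B3 \<in> sets borel \<and> B3 \<subseteq> {z. Re z > 0 \<and> Im z = 0} \<and>
                emeasure M ((space M - Y) \<inter> (h -` B3 \<inter> space M)) > 0)"
  obtains G \<kappa> where "weight_vanishing_on M Y G" "\<kappa> > 0" "(\<integral>x. of_real (G x) * h x \<partial>M) = of_real \<kappa>"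
  using pieces
proof (elim disjE exE conjE)
  fix B1 B2 :: "complex set"
  assume borel: "B1 \<in> sets borel" "B2 \<in> sets borel"
    and "B1 \<subseteq> {z. Re z > 0 \<and> Im z < 0}" "B2 \<subseteq> {z. Re z > 0 \<and> Im z > 0}"
    and pos: "emeasure M ((space M - Y) \<inter> (h -` B1 \<inter> space M)) > 0"
      "emeasure M ((space M - Y) \<inter> (h -` B2 \<inter> space M)) > 0"
  then have "B1 \<subseteq> {z. Re (1 * z) > 0 \<and> Im (1 * z) < 0}" "B2 \<subseteq> {z. Re (1 * z) > 0 \<and> Im (1 * z) > 0}"
    by simp_all
  then obtain T\<^sub>1 T\<^sub>2 where T: "T\<^sub>1 \<in> sets M" "T\<^sub>2 \<in> sets M" "emeasure M T\<^sub>1 < \<infinity>"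
      "emeasure M T\<^sub>2 < \<infinity>" "T\<^sub>1 \<inter> Y = {}" "T\<^sub>2 \<inter> Y = {}"
      "Re (1 * (\<integral>x. indicator T\<^sub>1 x * h x \<partial>M)) > 0" "Im (1 * (\<integral>x. indicator T\<^sub>1 x * h x \<partial>M)) < 0"
      "Re (1 * (\<integral>x. indicator T\<^sub>2 x * h x \<partial>M)) > 0" "Im (1 * (\<integral>x. indicator T\<^sub>2 x * h x \<partial>M)) > 0"
    using obtain_quadrant_pieces[OF h h_bounded Y borel _ _ pos] by blast
  then obtain G \<kappa> where "weight_vanishing_on M Y G" "\<kappa> > 0"
      "1 * (\<integral>x. of_real (G x) * h x \<partial>M) = of_real \<kappa>"
    using obtain_weight_two_pieces[OF h h_bounded T] by blast
  then show thesis using that by simp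
next
  fix B3 :: "complex set"
  assume "B3 \<in> sets borel" "B3 \<subseteq> {z. Re z > 0 \<and> Im z = 0}"
    and "emeasure M ((space M - Y) \<inter> (h -` B3 \<inter> space M)) > 0"
  then show thesis
    using obtain_weight_real_axis[OF h h_bounded Y] that by blast
qed

lemma (in sigma_finite_measure) exists_cont_frame_q_map_eq_0:
  fixes h :: "'a \<Rightarrow> complex" and b :: "complex^'n::finite"
  assumes h: "h \<in> borel_measurable M" and h_bounded: "AE x in M. cmod (h x) \<le> C" and "b \<noteq> 0"
    and Y: "Y \<in> sets M" "L2_dim_ge M Y TYPE('n)"
    and h_negative: "AE x in M. x \<in> Y \<longrightarrow> h x \<in> \<real> \<and> Re (h x) < 0"
    and pieces: "(\<exists>B1 B2. B1 \<in> sets borel \<and> B2 \<in> sets borel \<and>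
                B1 \<subseteq> {z. Re z > 0 \<and> Im z < 0} \<and> B2 \<subseteq> {z. Re z > 0 \<and> Im z > 0} \<and>
                emeasure M ((space M - Y) \<inter> (h -` B1 \<inter> space M)) > 0 \<and>
                emeasure M ((space M - Y) \<inter> (h -` B2 \<inter> space M)) > 0) \<or>
             (\<exists>B3. B3 \<in> sets borel \<and> B3 \<subseteq> {z. Re z > 0 \<and> Im z = 0} \<and>
                emeasure M ((space M - Y) \<inter> (h -` B3 \<inter> space M)) > 0)"
  shows "\<exists>\<Phi> :: 'a \<Rightarrow> complex^'n. cont_frame M \<Phi> \<and> q_map M h b \<Phi> = 0"
proof -
  obtain P :: "'a \<Rightarrow> complex^'n" where P: "square_integrable M P" "\<And>x. x \<notin> Y \<Longrightarrow> P x = 0"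
    and lower: "has_lower_frame_bound M P"
    using L2_dim_ge_obtain_frame_supported[OF Y] by blast
  obtain \<rho> where "\<rho> > 0" and \<rho>: "cinner_n b (q_map M h b P) = - of_real \<rho>"
    using cinner_n_q_map_negative[OF h h_bounded P lower \<open>b \<noteq> 0\<close> h_negative] by blast
  obtain G \<kappa> where G: "weight_vanishing_on M Y G" and "\<kappa> > 0"
    and \<kappa>: "(\<integral>x. of_real (G x) * h x \<partial>M) = of_real \<kappa>"
    using obtain_weight_integral_positive_real[OF h h_bounded Y(1) pieces] by blast
  have "cinner_n b (0 - 1\<^sup>2 *\<^sub>R q_map M h b P) * (\<integral>x. of_real (G x) * h x \<partial>M) = of_real (\<rho> * \<kappa>)"
    by (simp add: cinner_n_minus_right \<rho> \<kappa>)
  then show ?thesis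
    using \<open>\<rho> > 0\<close> \<open>\<kappa> > 0\<close>
    by (intro exists_cont_frame_q_map_eq[OF h h_bounded P lower G, where t = 1 and \<kappa> = "\<rho> * \<kappa>"])
       simp_all
qed

lemma (in sigma_finite_measure) exists_cont_frame_q_map_eq_quadrants:
  fixes h :: "'a \<Rightarrow> complex" and b d :: "complex^'n::finite"
  assumes h[measurable]: "h \<in> borel_measurable M" and h_bounded: "AE x in M. cmod (h x) \<le> C"
    and Y: "Y \<in> sets M" "L2_dim_ge M Y TYPE('n)"
    and B_borel: "B1 \<in> sets borel" "B2 \<in> sets borel"
    and B1: "B1 \<subseteq> {z. Re (cinner_n b d * z) > 0 \<and> Im (cinner_n b d * z) < 0}"
    and B2: "B2 \<subseteq> {z. Re (cinner_n b d * z) > 0 \<and> Im (cinner_n b d * z) > 0}"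
    and S\<^sub>1_pos: "emeasure M ((space M - Y) \<inter> (h -` B1 \<inter> space M)) > 0"
    and S\<^sub>2_pos: "emeasure M ((space M - Y) \<inter> (h -` B2 \<inter> space M)) > 0"
  shows "\<exists>\<Phi> :: 'a \<Rightarrow> complex^'n. cont_frame M \<Phi> \<and> q_map M h b \<Phi> = d"
proof -
  define c where "c = cinner_n b d"
  obtain P :: "'a \<Rightarrow> complex^'n" where P: "square_integrable M P" "\<And>x. x \<notin> Y \<Longrightarrow> P x = 0"
    and lower: "has_lower_frame_bound M P"
    using L2_dim_ge_obtain_frame_supported[OF Y] by blast
  obtain T\<^sub>1 T\<^sub>2 where T: "T\<^sub>1 \<in> sets M" "T\<^sub>2 \<in> sets M" "emeasure M T\<^sub>1 < \<infinity>"
      "emeasure M T\<^sub>2 < \<infinity>" "T\<^sub>1 \<inter> Y = {}" "T\<^sub>2 \<inter> Y = {}"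
    and H: "Re (c * (\<integral>x. indicator T\<^sub>1 x * h x \<partial>M)) > 0" "Im (c * (\<integral>x. indicator T\<^sub>1 x * h x \<partial>M)) < 0"
      "Re (c * (\<integral>x. indicator T\<^sub>2 x * h x \<partial>M)) > 0" "Im (c * (\<integral>x. indicator T\<^sub>2 x * h x \<partial>M)) > 0"
    using obtain_quadrant_pieces[OF h h_bounded Y(1) B_borel B1[folded c_def] B2[folded c_def] S\<^sub>1_pos S\<^sub>2_pos]
    by blast
  define H\<^sub>1 where "H\<^sub>1 = (\<integral>x. indicator T\<^sub>1 x * h x \<partial>M)"
  define H\<^sub>2 where "H\<^sub>2 = (\<integral>x. indicator T\<^sub>2 x * h x \<partial>M)"
  define \<beta> where "\<beta> = cinner_n b (q_map M h b P)"
  define U where "U = {c'. Re (c' * H\<^sub>1) > 0 \<and> Im (c' * H\<^sub>1) < 0 \<and> Re (c' * H\<^sub>2) > 0 \<and> Im (c' * H\<^sub>2) > 0}"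
  have "open U"
    unfolding U_def by (intro open_Collect_conj open_Collect_less continuous_intros)
  moreover have "c \<in> U"
    using H unfolding U_def H\<^sub>1_def H\<^sub>2_def by simp
  ultimately obtain \<tau> where "\<tau> > 0" "c - \<tau> *\<^sub>R \<beta> \<in> U"
    using open_obtain_small_shift by blast
  then have \<tau>: "Re ((c - \<tau> *\<^sub>R \<beta>) * H\<^sub>1) > 0" "Im ((c - \<tau> *\<^sub>R \<beta>) * H\<^sub>1) < 0"
      "Re ((c - \<tau> *\<^sub>R \<beta>) * H\<^sub>2) > 0" "Im ((c - \<tau> *\<^sub>R \<beta>) * H\<^sub>2) > 0"
    unfolding U_def by simp_all
  obtain G \<kappa> where G: "weight_vanishing_on M Y G" and "\<kappa> > 0"
    and \<kappa>: "(c - \<tau> *\<^sub>R \<beta>) * (\<integral>x. of_real (G x) * h x \<partial>M) = of_real \<kappa>"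
    using obtain_weight_two_pieces[OF h h_bounded T \<tau>[unfolded H\<^sub>1_def H\<^sub>2_def]] by blast
  have "cinner_n b (d - (sqrt \<tau>)\<^sup>2 *\<^sub>R q_map M h b P) = c - \<tau> *\<^sub>R \<beta>"
    using \<open>\<tau> > 0\<close>
    by (simp add: c_def \<beta>_def cinner_n_diff_right cinner_n_scaleR_right scaleR_conv_of_real[where 'a = complex])
  then show ?thesis
    using \<kappa> \<open>\<tau> > 0\<close> \<open>\<kappa> > 0\<close>
    by (intro exists_cont_frame_q_map_eq[OF h h_bounded P lower G, where t = "sqrt \<tau>"]) simp_all
qed

theorem proposition5p11:
  fixes M :: "'a measure" and h :: "'a \<Rightarrow> complex"
    and b d :: "complex ^ 'n::finite" and \<epsilon> :: real
  assumes "sigma_finite_measure M"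
    and "b \<noteq> 0" and "\<epsilon> > 0"
    and "Linf_fun M h"
    and "d \<noteq> 0 \<Longrightarrow> (\<exists>Y B1 B2. Y \<in> sets M \<and> L2_dim_ge M Y TYPE('n) \<and>
            B1 \<in> sets borel \<and> B2 \<in> sets borel \<and>
            B1 \<subseteq> {z. Re (cinner_n b d * z) > \<epsilon> \<and> Im (cinner_n b d * z) < - \<epsilon>} \<and>
            B2 \<subseteq> {z. Re (cinner_n b d * z) > \<epsilon> \<and> Im (cinner_n b d * z) > \<epsilon>} \<and>
            emeasure M ((space M - Y) \<inter> (h -` B1 \<inter> space M)) > 0 \<and>
            emeasure M ((space M - Y) \<inter> (h -` B2 \<inter> space M)) > 0)"
    and "d = 0 \<Longrightarrow> (\<exists>Y. Y \<in> sets M \<and> L2_dim_ge M Y TYPE('n) \<and>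
            (AE x in M. x \<in> Y \<longrightarrow> h x \<in> \<real> \<and> Re (h x) < 0) \<and>
            ((\<exists>B1 B2. B1 \<in> sets borel \<and> B2 \<in> sets borel \<and>
                B1 \<subseteq> {z. Re z > 0 \<and> Im z < 0} \<and> B2 \<subseteq> {z. Re z > 0 \<and> Im z > 0} \<and>
                emeasure M ((space M - Y) \<inter> (h -` B1 \<inter> space M)) > 0 \<and>
                emeasure M ((space M - Y) \<inter> (h -` B2 \<inter> space M)) > 0) \<or>
             (\<exists>B3. B3 \<in> sets borel \<and> B3 \<subseteq> {z. Re z > 0 \<and> Im z = 0} \<and>
                emeasure M ((space M - Y) \<inter> (h -` B3 \<inter> space M)) > 0)))"
  shows "\<exists>\<Phi> :: 'a \<Rightarrow> complex ^ 'n. cont_frame M \<Phi> \<and> q_map M h b \<Phi> = d"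
proof -
  interpret sigma_finite_measure M by fact
  obtain C where h: "h \<in> borel_measurable M" and h_bounded: "AE x in M. cmod (h x) \<le> C"
    using assms(4) unfolding Linf_fun_def by blast
  show ?thesis
  proof (cases "d = 0")
    case True
    then show ?thesis
      using assms(6) exists_cont_frame_q_map_eq_0[OF h h_bounded \<open>b \<noteq> 0\<close>] by blast
  next
    case False
    then obtain Y B1 B2 where "Y \<in> sets M" "L2_dim_ge M Y TYPE('n)" "B1 \<in> sets borel" "B2 \<in> sets borel"
        and B1: "B1 \<subseteq> {z. Re (cinner_n b d * z) > \<epsilon> \<and> Im (cinner_n b d * z) < - \<epsilon>}"
        and B2: "B2 \<subseteq> {z. Re (cinner_n b d * z) > \<epsilon> \<and> Im (cinner_n b d * z) > \<epsilon>}"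
        and "emeasure M ((space M - Y) \<inter> (h -` B1 \<inter> space M)) > 0"
          "emeasure M ((space M - Y) \<inter> (h -` B2 \<inter> space M)) > 0"
      using assms(5) by blast
    moreover have "B1 \<subseteq> {z. Re (cinner_n b d * z) > 0 \<and> Im (cinner_n b d * z) < 0}"
      "B2 \<subseteq> {z. Re (cinner_n b d * z) > 0 \<and> Im (cinner_n b d * z) > 0}"
      using B1 B2 \<open>\<epsilon> > 0\<close> by auto
    ultimately show ?thesis
      by (intro exists_cont_frame_q_map_eq_quadrants[OF h h_bounded])
  qed
qed

end
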